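(* Let $A$ and $B$ be square $\mathbb{N}$-matrices. If $A$ and $B$ are balanced strong shift equivalent, then $A$ and $B$ are unitally shift equivalent.
   Context: A rectangular $\{0,1\}$-matrix $D$ is a division matrix if every row contains at least one $1$ and every column contains exactly one $1$. For square $\mathbb{N}$-matrices $A,B$ with no zero rows, $B$ is an outsplit of $A$ if there are a division matrix $D$ and an $\mathbb{N}$-matrix $E$ with $A=DE$ and $B=ED$. $A$ and $B$ are balanced elementary strong shift equivalent if there are a division matrix $D$ and rectangular $\mathbb{N}$-matrices $R_A,R_B$ with $A=D^tR_A$, $B=D^tR_B$ and $R_AD^t=R_BD^t$. Balanced strong shift equivalence is the equivalence relation generated by balanced elementary strong shift equivalence and outsplits. Two square $\mathbb{N}$-matrices $A,B$ are shift equivalent if there are an integer $\ell\ge1$ and rectangular $\mathbb{N}$-matrices $R,S$ with $A^\ell=RS$, $B^\ell=SR$, $AR=RB$, $BS=SA$. Such a shift equivalence $(R,S)$ is unital if there are $m,k\in\mathbb{N}$ with $(B^t)^mR^t\underline{1}=(B^t)^{m+k}\underline{1}$, where $\underline1$ is the all-ones column vector. $A$ and $B$ are unitally shift equivalent if a unital shift equivalence from $A$ to $B$ exists. *)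

theory Defs
  imports "Jordan_Normal_Form.Matrix"
begin

definition division_mat :: "nat mat \<Rightarrow> bool" where
  "division_mat D \<longleftrightarrow>
     (\<forall>i<dim_row D. \<forall>j<dim_col D. D $$ (i,j) \<in> {0,1}) \<and>
     (\<forall>i<dim_row D. \<exists>j<dim_col D. D $$ (i,j) = 1) \<and>
     (\<forall>j<dim_col D. \<exists>!i. i < dim_row D \<and> D $$ (i,j) = 1)"

definition no_zero_rows :: "nat mat \<Rightarrow> bool" where
  "no_zero_rows A \<longleftrightarrow> (\<forall>i<dim_row A. \<exists>j<dim_col A. A $$ (i,j) \<noteq> 0)"

definition sq_nzr :: "nat mat \<Rightarrow> bool" where
  "sq_nzr A \<longleftrightarrow> square_mat A \<and> no_zero_rows A"

definition outsplit :: "nat mat \<Rightarrow> nat mat \<Rightarrow> bool" where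
  "outsplit A B \<longleftrightarrow> sq_nzr A \<and> sq_nzr B \<and>
     (\<exists>D E. division_mat D \<and> dim_col D = dim_row E \<and> dim_col E = dim_row D \<and>
            A = D * E \<and> B = E * D)"

definition balanced_elem_sse :: "nat mat \<Rightarrow> nat mat \<Rightarrow> bool" where
  "balanced_elem_sse A B \<longleftrightarrow> sq_nzr A \<and> sq_nzr B \<and>
     (\<exists>D RA RB. division_mat D \<and>
        dim_row RA = dim_row D \<and> dim_row RB = dim_row D \<and>
        A = transpose_mat D * RA \<and> B = transpose_mat D * RB \<and>
        RA * transpose_mat D = RB * transpose_mat D)"

definition balanced_sse :: "nat mat \<Rightarrow> nat mat \<Rightarrow> bool" where
  "balanced_sse = (\<lambda>A B. balanced_elem_sse A B \<or> balanced_elem_sse B A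
                         \<or> outsplit A B \<or> outsplit B A)\<^sup>*\<^sup>*"

definition unital_shift_equiv :: "nat mat \<Rightarrow> nat mat \<Rightarrow> bool" where
  "unital_shift_equiv A B \<longleftrightarrow> square_mat A \<and> square_mat B \<and>
     (\<exists>l R S. l \<ge> 1 \<and> R \<in> carrier_mat (dim_row A) (dim_row B) \<and>
        S \<in> carrier_mat (dim_row B) (dim_row A) \<and>
        A ^\<^sub>m l = R * S \<and> B ^\<^sub>m l = S * R \<and> A * R = R * B \<and> B * S = S * A \<and>
        (\<exists>m k. (transpose_mat B ^\<^sub>m m) *\<^sub>v (transpose_mat R *\<^sub>v vec (dim_row A) (\<lambda>_. 1))
               = (transpose_mat B ^\<^sub>m (m + k)) *\<^sub>v vec (dim_row B) (\<lambda>_. 1)))"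

end

theory Submission
  imports Defs
begin

(* Unital shift equivalence is reflexive, and transitive because witnesses compose:
   (R1 R2, S2 S1) has lag l1 + l2, and unitality survives since R2 intertwines the middle
   matrix with the last one.  So it suffices to treat the generators.  An outsplit
   A = D E, B = E D is a shift equivalence of lag one via (D, E); it is unital in both
   directions because every column of the division matrix D sums to one.  A balanced
   elementary equivalence A = T RA, B = T RB with RA T = RB T gives A B = B^2 and B A = A^2,
   so (B, A) is a shift equivalence of lag two, unital for the trivial reason that R = B. *)

lemma pow_mat_add:
  assumes "(A :: 'a :: semiring_1 mat) \<in> carrier_mat n n"
  shows "A ^\<^sub>m (a + b) = A ^\<^sub>m a * A ^\<^sub>m b"
proof -
  interpret semiring "ring_mat TYPE('a) n ()" by (rule semiring_mat)
  show ?thesis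
    using assms nat_pow_mult[of A a b]
    by (simp add: pow_mat_ring_pow[OF assms, where b = "()"] ring_mat_simps)
qed

lemma pow_mat_intertwine:
  assumes A: "(A :: 'a :: semiring_1 mat) \<in> carrier_mat n n" and B: "B \<in> carrier_mat p p"
    and R: "R \<in> carrier_mat n p" and AR: "A * R = R * B"
  shows "A ^\<^sub>m k * R = R * B ^\<^sub>m k"
proof (induction k)
  case 0
  show ?case using A B R by simp
next
  case (Suc k)
  have "A ^\<^sub>m Suc k * R = A ^\<^sub>m k * (A * R)"
    using A R by (simp add: assoc_mult_mat[of _ n n _ n _ p])
  also have "\<dots> = (A ^\<^sub>m k * R) * B"
    using AR A R B by (simp add: assoc_mult_mat[of _ n n _ p _ p])
  also have "\<dots> = R * B ^\<^sub>m Suc k"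
    using Suc A R B by (simp add: assoc_mult_mat[of _ n p _ p _ p])
  finally show ?case .
qed

lemma transpose_pow_mat:
  assumes A: "(A :: 'a :: comm_semiring_1 mat) \<in> carrier_mat n n"
  shows "transpose_mat (A ^\<^sub>m k) = transpose_mat A ^\<^sub>m k"
proof (induction k)
  case 0
  show ?case using A by simp
next
  case (Suc k)
  have "transpose_mat (A ^\<^sub>m Suc k) = transpose_mat A * transpose_mat A ^\<^sub>m k"
    using A Suc by (simp add: transpose_mult[of _ n n _ n])
  also have "\<dots> = transpose_mat A ^\<^sub>m Suc k"
    using pow_mat_add[of "transpose_mat A" n 1 k] A by simp
  finally show ?case .
qed

definition col_sums :: "'a :: semiring_1 mat \<Rightarrow> 'a vec" where
  "col_sums X = transpose_mat X *\<^sub>v vec (dim_row X) (\<lambda>_. 1)"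

lemma col_sums_one [simp]: "col_sums (1\<^sub>m n :: 'a :: semiring_1 mat) = vec n (\<lambda>_. 1)"
  unfolding col_sums_def by simp

lemma col_sums_mult:
  assumes X: "(X :: 'a :: comm_semiring_1 mat) \<in> carrier_mat n p" and Y: "Y \<in> carrier_mat p q"
  shows "col_sums (X * Y) = transpose_mat Y *\<^sub>v col_sums X"
  unfolding col_sums_def using X Y
  by (simp add: transpose_mult[OF X Y] assoc_mult_mat_vec[of _ q p _ n])

lemma col_sums_mult_cong:
  assumes "(X :: 'a :: comm_semiring_1 mat) \<in> carrier_mat n p" and "X' \<in> carrier_mat n' p"
    and "Y \<in> carrier_mat p q" and "col_sums X = col_sums X'"
  shows "col_sums (X * Y) = col_sums (X' * Y)"
  using col_sums_mult[OF assms(1,3)] col_sums_mult[OF assms(2,3)] assms(4) by simp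

lemma col_sums_division_mat:
  assumes D: "division_mat D"
  shows "col_sums D = vec (dim_col D) (\<lambda>_. 1)"
proof (rule eq_vecI)
  fix j assume "j < dim_vec (vec (dim_col D) (\<lambda>_. 1 :: nat))"
  then have j: "j < dim_col D" by simp
  then obtain i0 where i0: "i0 < dim_row D" "D $$ (i0, j) = 1"
    and unique: "\<And>i. i < dim_row D \<Longrightarrow> D $$ (i, j) = 1 \<Longrightarrow> i = i0"
    using D unfolding division_mat_def by metis
  have "D $$ (i, j) = (if i = i0 then 1 else 0)" if "i < dim_row D" for i
  proof -
    have "D $$ (i, j) \<in> {0, 1}" using D j that unfolding division_mat_def by blast
    moreover have "D $$ (i, j) \<noteq> 1" if "i \<noteq> i0" using unique \<open>i < dim_row D\<close> that by blast
    ultimately show ?thesis using i0 by auto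
  qed
  then have "col_sums D $ j = (\<Sum>i \<in> {0..<dim_row D}. if i = i0 then 1 else 0)"
    unfolding col_sums_def using j by (simp add: scalar_prod_def)
  also have "\<dots> = 1" using i0 by simp
  finally show "col_sums D $ j = vec (dim_col D) (\<lambda>_. 1) $ j" using j by simp
qed (simp add: col_sums_def)

definition shift_equivalence :: "'a :: semiring_1 mat \<Rightarrow> 'a mat \<Rightarrow> nat \<Rightarrow> 'a mat \<Rightarrow> 'a mat \<Rightarrow> bool" where
  "shift_equivalence A B l R S \<longleftrightarrow>
     A ^\<^sub>m l = R * S \<and> B ^\<^sub>m l = S * R \<and> A * R = R * B \<and> B * S = S * A"

lemma shift_equivalence_comp:
  assumes A: "(A :: 'a :: semiring_1 mat) \<in> carrier_mat n n" and B: "B \<in> carrier_mat p p"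
    and C: "C \<in> carrier_mat q q"
    and R1: "R1 \<in> carrier_mat n p" and S1: "S1 \<in> carrier_mat p n"
    and R2: "R2 \<in> carrier_mat p q" and S2: "S2 \<in> carrier_mat q p"
    and AB: "shift_equivalence A B l1 R1 S1" and BC: "shift_equivalence B C l2 R2 S2"
  shows "shift_equivalence A C (l1 + l2) (R1 * R2) (S2 * S1)"
proof -
  note AB = AB[unfolded shift_equivalence_def] and BC = BC[unfolded shift_equivalence_def]
  have "A ^\<^sub>m (l1 + l2) = R1 * (S1 * A ^\<^sub>m l2)"
    using AB A R1 S1 by (simp add: pow_mat_add[OF A] assoc_mult_mat[of _ n p _ n _ n])
  also have "\<dots> = R1 * (R2 * S2 * S1)"
    using AB BC pow_mat_intertwine[OF B A S1, of l2] by simp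
  also have "\<dots> = R1 * R2 * (S2 * S1)"
    using R1 R2 S2 S1 by (simp add: assoc_mult_mat[of _ n p _ q _ n] assoc_mult_mat[of _ p q _ p _ n])
  finally have pow_A: "A ^\<^sub>m (l1 + l2) = R1 * R2 * (S2 * S1)" .
  have "C ^\<^sub>m (l1 + l2) = S2 * (R2 * C ^\<^sub>m l1)"
    using BC C R2 S2
    by (simp add: pow_mat_add[OF C, of l2 l1, unfolded add.commute[of l2]] assoc_mult_mat[of _ q p _ q _ q])
  also have "\<dots> = S2 * (S1 * R1 * R2)"
    using AB BC pow_mat_intertwine[OF B C R2, of l1] by simp
  also have "\<dots> = S2 * S1 * (R1 * R2)"
    using R1 R2 S2 S1 by (simp add: assoc_mult_mat[of _ q p _ n _ q] assoc_mult_mat[of _ p n _ p _ q])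
  finally have pow_C: "C ^\<^sub>m (l1 + l2) = S2 * S1 * (R1 * R2)" .
  have "A * (R1 * R2) = R1 * R2 * C"
    using AB BC A B R1 R2 C
    by (simp add: assoc_mult_mat[of _ n n _ p _ q, symmetric] assoc_mult_mat[of _ n p _ p _ q]
        assoc_mult_mat[of _ n p _ q _ q])
  moreover have "C * (S2 * S1) = S2 * S1 * A"
    using AB BC A B S1 S2 C
    by (simp add: assoc_mult_mat[of _ q q _ p _ n, symmetric] assoc_mult_mat[of _ q p _ p _ n]
        assoc_mult_mat[of _ q p _ n _ n])
  ultimately show ?thesis using pow_A pow_C unfolding shift_equivalence_def by blast
qed

(* The unitality condition (B^t)^m R^t 1 = (B^t)^(m+k) 1 of a shift equivalence (R, S)
   from A to B, read as an equality of column-sum vectors. *)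
definition unital :: "'a :: semiring_1 mat \<Rightarrow> 'a mat \<Rightarrow> bool" where
  "unital R B \<longleftrightarrow> (\<exists>m k. col_sums (R * B ^\<^sub>m m) = col_sums (B ^\<^sub>m (m + k)))"

lemma unital_comp:
  assumes B: "(B :: 'a :: comm_semiring_1 mat) \<in> carrier_mat p p" and C: "C \<in> carrier_mat q q"
    and R1: "R1 \<in> carrier_mat n p" and R2: "R2 \<in> carrier_mat p q" and BC: "B * R2 = R2 * C"
    and "unital R1 B" and "unital R2 C"
  shows "unital (R1 * R2) C"
proof -
  obtain m1 k1 m2 k2 where u1: "col_sums (R1 * B ^\<^sub>m m1) = col_sums (B ^\<^sub>m (m1 + k1))"
    and u2: "col_sums (R2 * C ^\<^sub>m m2) = col_sums (C ^\<^sub>m (m2 + k2))"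
    using assms(6,7) unfolding unital_def by blast
  have shift: "B ^\<^sub>m j * R2 = R2 * C ^\<^sub>m j" for j by (rule pow_mat_intertwine[OF B C R2 BC])
  have BR2: "B ^\<^sub>m j * R2 \<in> carrier_mat p q" for j
    using mult_carrier_mat[OF pow_carrier_mat[OF B] R2] .
  have "R1 * R2 * C ^\<^sub>m (m1 + m2) = R1 * (B ^\<^sub>m (m1 + m2) * R2)"
    using C R1 R2 by (simp add: shift assoc_mult_mat[of _ n p _ q _ q])
  also have "\<dots> = (R1 * B ^\<^sub>m m1) * (B ^\<^sub>m m2 * R2)"
    using B R1 R2 BR2
    by (simp add: pow_mat_add[OF B] assoc_mult_mat[of _ n p _ p _ q] assoc_mult_mat[of _ p p _ p _ q])
  finally have "col_sums (R1 * R2 * C ^\<^sub>m (m1 + m2)) = col_sums (B ^\<^sub>m (m1 + k1) * (B ^\<^sub>m m2 * R2))"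
    using col_sums_mult_cong[OF mult_carrier_mat[OF R1 pow_carrier_mat[OF B]] pow_carrier_mat[OF B] BR2 u1]
    by simp
  also have "B ^\<^sub>m (m1 + k1) * (B ^\<^sub>m m2 * R2) = B ^\<^sub>m (m1 + k1 + m2) * R2"
    using B R2 by (simp add: pow_mat_add[OF B, of "m1 + k1" m2] assoc_mult_mat[of _ p p _ p _ q])
  also have "\<dots> = (R2 * C ^\<^sub>m m2) * C ^\<^sub>m (m1 + k1)"
    using C R2
    by (simp add: shift pow_mat_add[OF C, of m2 "m1 + k1", unfolded add.commute[of m2]]
        assoc_mult_mat[of _ p q _ q _ q])
  also have "col_sums \<dots> = col_sums (C ^\<^sub>m (m2 + k2) * C ^\<^sub>m (m1 + k1))"
    using col_sums_mult_cong[OF mult_carrier_mat[OF R2 pow_carrier_mat[OF C]] pow_carrier_mat[OF C]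
        pow_carrier_mat[OF C] u2] .
  also have "\<dots> = col_sums (C ^\<^sub>m ((m1 + m2) + (k1 + k2)))"
    using C by (simp add: pow_mat_add[symmetric] ac_simps)
  finally show ?thesis unfolding unital_def by blast
qed

lemma unital_iff_transpose:
  assumes B: "(B :: 'a :: comm_semiring_1 mat) \<in> carrier_mat p p" and R: "R \<in> carrier_mat n p"
  shows "unital R B \<longleftrightarrow> (\<exists>m k. (transpose_mat B ^\<^sub>m m) *\<^sub>v (transpose_mat R *\<^sub>v vec n (\<lambda>_. 1))
                                = (transpose_mat B ^\<^sub>m (m + k)) *\<^sub>v vec p (\<lambda>_. 1))"
proof -
  have "col_sums (X * B ^\<^sub>m j) = (transpose_mat B ^\<^sub>m j) *\<^sub>v col_sums X"
    if "X \<in> carrier_mat n' p" for X n' j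
    using col_sums_mult[OF that pow_carrier_mat[OF B]] by (simp add: transpose_pow_mat[OF B])
  from this[OF R] this[OF one_carrier_mat] show ?thesis
    unfolding unital_def using R B by (simp add: col_sums_def)
qed

lemma square_mat_iff_carrier_mat: "square_mat A \<longleftrightarrow> A \<in> carrier_mat (dim_row A) (dim_row A)"
  unfolding carrier_mat_def by simp

lemma unital_shift_equivI:
  assumes A: "A \<in> carrier_mat n n" and B: "B \<in> carrier_mat p p"
    and R: "R \<in> carrier_mat n p" and S: "S \<in> carrier_mat p n" and l: "l \<ge> 1"
    and AB: "shift_equivalence A B l R S" and "unital R B"
  shows "unital_shift_equiv A B"
proof -
  obtain m k where
    "(transpose_mat B ^\<^sub>m m) *\<^sub>v (transpose_mat R *\<^sub>v vec n (\<lambda>_. 1))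
      = (transpose_mat B ^\<^sub>m (m + k)) *\<^sub>v vec p (\<lambda>_. 1)"
    using \<open>unital R B\<close> unfolding unital_iff_transpose[OF B R] by blast
  moreover have "dim_row A = n" "dim_row B = p" "square_mat A" "square_mat B" using A B by auto
  ultimately show ?thesis
    using R S l AB unfolding unital_shift_equiv_def shift_equivalence_def
    by blast
qed

lemma unital_shift_equivE:
  assumes "unital_shift_equiv A B"
  obtains n p l R S where "A \<in> carrier_mat n n" "B \<in> carrier_mat p p"
    "R \<in> carrier_mat n p" "S \<in> carrier_mat p n" "l \<ge> 1"
    "shift_equivalence A B l R S" "unital R B"
proof -
  obtain l R S m k where sq: "square_mat A" "square_mat B"
    and R: "R \<in> carrier_mat (dim_row A) (dim_row B)" and S: "S \<in> carrier_mat (dim_row B) (dim_row A)"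
    and l: "l \<ge> 1" and AB: "shift_equivalence A B l R S"
    and "(transpose_mat B ^\<^sub>m m) *\<^sub>v (transpose_mat R *\<^sub>v vec (dim_row A) (\<lambda>_. 1))
          = (transpose_mat B ^\<^sub>m (m + k)) *\<^sub>v vec (dim_row B) (\<lambda>_. 1)"
    using assms unfolding unital_shift_equiv_def shift_equivalence_def by blast
  moreover have B: "B \<in> carrier_mat (dim_row B) (dim_row B)"
    using sq square_mat_iff_carrier_mat by blast
  ultimately have "unital R B" unfolding unital_iff_transpose[OF B R] by blast
  with sq R S l AB B show thesis using that square_mat_iff_carrier_mat by blast
qed

lemma unital_self:
  assumes "(B :: 'a :: semiring_1 mat) \<in> carrier_mat p p"
  shows "unital B B"
  unfolding unital_def using assms by (intro exI[of _ 0] exI[of _ 1]) simp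

lemma unital_shift_equiv_refl:
  assumes A: "A \<in> carrier_mat n n"
  shows "unital_shift_equiv A A"
proof -
  have "shift_equivalence A A 1 A (1\<^sub>m n)"
    unfolding shift_equivalence_def using A by simp
  then show ?thesis using unital_shift_equivI[OF A A A one_carrier_mat, of 1] unital_self[OF A] by simp
qed

lemma unital_shift_equiv_trans:
  assumes "unital_shift_equiv A B" and "unital_shift_equiv B C"
  shows "unital_shift_equiv A C"
proof -
  obtain n p l1 R1 S1 where A: "A \<in> carrier_mat n n" and B: "B \<in> carrier_mat p p"
    and R1: "R1 \<in> carrier_mat n p" and S1: "S1 \<in> carrier_mat p n"
    and l1: "l1 \<ge> 1" and AB: "shift_equivalence A B l1 R1 S1" and u1: "unital R1 B"
    using assms(1) by (rule unital_shift_equivE)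
  obtain p' q l2 R2 S2 where B': "B \<in> carrier_mat p' p'" and C: "C \<in> carrier_mat q q"
    and R2: "R2 \<in> carrier_mat p' q" and S2: "S2 \<in> carrier_mat q p'"
    and BC: "shift_equivalence B C l2 R2 S2" and u2: "unital R2 C"
    using assms(2) by (rule unital_shift_equivE)
  from B B' have "p' = p" by auto
  note R2 = R2[unfolded this] and S2 = S2[unfolded this]
  have "B * R2 = R2 * C" using BC unfolding shift_equivalence_def by blast
  then have "unital (R1 * R2) C" by (rule unital_comp[OF B C R1 R2 _ u1 u2])
  moreover have "l1 + l2 \<ge> 1" using l1 by simp
  ultimately show ?thesis
    using unital_shift_equivI[OF A C mult_carrier_mat[OF R1 R2] mult_carrier_mat[OF S2 S1]]
      shift_equivalence_comp[OF A B C R1 S1 R2 S2 AB BC] by blast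
qed

lemma shift_equivalence_factors:
  assumes D: "(D :: 'a :: semiring_1 mat) \<in> carrier_mat r c" and E: "E \<in> carrier_mat c r"
  shows "shift_equivalence (D * E) (E * D) 1 D E"
  unfolding shift_equivalence_def using D E by simp

lemma unital_shift_equiv_division_factors:
  assumes D: "D \<in> carrier_mat r c" and E: "E \<in> carrier_mat c r" and "division_mat D"
  shows "unital_shift_equiv (D * E) (E * D)" and "unital_shift_equiv (E * D) (D * E)"
proof -
  have ones: "col_sums D = vec c (\<lambda>_. 1)"
    using col_sums_division_mat[OF \<open>division_mat D\<close>] D by simp
  have DE: "D * E \<in> carrier_mat r r" and ED: "E * D \<in> carrier_mat c c" using D E by auto
  have "unital D (E * D)"
    unfolding unital_def using D ED E ones by (intro exI[of _ 0]) simp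
  then show "unital_shift_equiv (D * E) (E * D)"
    using unital_shift_equivI[OF DE ED D E _ shift_equivalence_factors[OF D E]] by simp
  have "col_sums (E * (D * E) ^\<^sub>m 0) = col_sums ((D * E) ^\<^sub>m (0 + 1))"
    using D DE E col_sums_mult[OF D E] ones by (simp add: col_sums_def)
  then have "unital E (D * E)" unfolding unital_def by blast
  then show "unital_shift_equiv (E * D) (D * E)"
    using unital_shift_equivI[OF ED DE E D _ shift_equivalence_factors[OF E D]] by simp
qed

lemma shift_equivalence_if_mult_eq_square:
  assumes "(A :: 'a :: semiring_1 mat) * B = B * B" and "B * A = A * A"
    and "A \<in> carrier_mat n n"
  shows "shift_equivalence A B 2 B A"
  unfolding shift_equivalence_def using assms by (simp add: numeral_2_eq_2)

lemma unital_shift_equiv_common_left_factor: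
  assumes T: "T \<in> carrier_mat c r" and RA: "RA \<in> carrier_mat r c" and RB: "RB \<in> carrier_mat r c"
    and eq: "RA * T = RB * T"
  shows "unital_shift_equiv (T * RA) (T * RB)"
proof -
  have A: "T * RA \<in> carrier_mat c c" and B: "T * RB \<in> carrier_mat c c" using T RA RB by auto
  have "(T * X) * (T * Y) = T * ((X * T) * Y)" if "X \<in> carrier_mat r c" "Y \<in> carrier_mat r c" for X Y
    using T that by (simp add: assoc_mult_mat[of _ c r _ c _ c] assoc_mult_mat[of _ r c _ r _ c])
  from this[OF RA RB] this[OF RB RB] this[OF RB RA] this[OF RA RA]
  have "shift_equivalence (T * RA) (T * RB) 2 (T * RB) (T * RA)"
    using shift_equivalence_if_mult_eq_square[OF _ _ A] RA RB eq by simp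
  then show ?thesis using unital_shift_equivI[OF A B B A, of 2] unital_self[OF B] by simp
qed

lemma unital_shift_equiv_if_outsplit:
  assumes "outsplit A B"
  shows "unital_shift_equiv A B" and "unital_shift_equiv B A"
proof -
  obtain D E where "division_mat D" and "dim_col D = dim_row E" and "dim_col E = dim_row D"
    and "A = D * E" and "B = E * D"
    using assms unfolding outsplit_def by blast
  moreover from this have "D \<in> carrier_mat (dim_row D) (dim_col D)" "E \<in> carrier_mat (dim_col D) (dim_row D)"
    by auto
  ultimately show "unital_shift_equiv A B" and "unital_shift_equiv B A"
    using unital_shift_equiv_division_factors by blast+
qed

lemma unital_shift_equiv_if_balanced_elem_sse:
  assumes "balanced_elem_sse A B"
  shows "unital_shift_equiv A B" and "unital_shift_equiv B A"
proof -
  obtain D RA RB where "square_mat A" and "square_mat B"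
    and "dim_row RA = dim_row D" and "dim_row RB = dim_row D"
    and A: "A = transpose_mat D * RA" and B: "B = transpose_mat D * RB"
    and eq: "RA * transpose_mat D = RB * transpose_mat D"
    using assms unfolding balanced_elem_sse_def sq_nzr_def by blast
  then have "RA \<in> carrier_mat (dim_row D) (dim_col D)" and "RB \<in> carrier_mat (dim_row D) (dim_col D)"
    by auto
  moreover have "transpose_mat D \<in> carrier_mat (dim_col D) (dim_row D)" by simp
  ultimately show "unital_shift_equiv A B" and "unital_shift_equiv B A"
    unfolding A B using eq unital_shift_equiv_common_left_factor by metis+
qed

lemma unital_shift_equiv_if_balanced_sse_step:
  assumes "balanced_elem_sse A B \<or> balanced_elem_sse B A \<or> outsplit A B \<or> outsplit B A"
  shows "unital_shift_equiv A B"
  using assms unital_shift_equiv_if_balanced_elem_sse unital_shift_equiv_if_outsplit by blast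

theorem proposition4p1:
  fixes A B :: "nat mat"
  assumes "square_mat A" and "square_mat B"
  assumes "balanced_sse A B"
  shows "unital_shift_equiv A B"
  using assms(3) unfolding balanced_sse_def
proof (induction rule: rtranclp_induct)
  case base
  show ?case using assms(1) square_mat_iff_carrier_mat unital_shift_equiv_refl by blast
next
  case (step B C)
  then show ?case using unital_shift_equiv_trans unital_shift_equiv_if_balanced_sse_step by blast
qed

end
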